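(* Let $X$ and $\Lambda$ be nonempty sets, $f: X\to\mathbb{R}$, and for each $\lambda\in\Lambda$ let $f_\lambda: X\to\mathbb{R}$, such that the feasible set $X_0:=\{x\in X:\ \sup_{\lambda\in\Lambda}f_\lambda(x)\le0\}$ is nonempty, $x^0\in X_0$ satisfies $f(x^0)=\inf_{x\in X_0}f(x)$, and $(f_\lambda(x))_{\lambda\in\Lambda}\in\ell^\infty(\Lambda)$ for every $x\in X$. Then there exist $\rho\ge0$ and $\Phi_0\in\ell^\infty(\Lambda)^*_+$ with $\rho+\Phi_0(\mathbf{1})=1$ such that the function $x\mapsto\rho f(x)+\Phi_0((f_\lambda(x))_{\lambda\in\Lambda})$ attains its infimum on $X$ at $x^0$ and $\Phi_0((f_\lambda(x^0))_{\lambda\in\Lambda})=0$, if and only if the family $(f_\lambda)_{\lambda\in\Lambda}\cup(f-f(x^0))$ is infsup-convex on $X$.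
   Context: $\ell^\infty(\Lambda)$ is the Banach space of bounded real functions on $\Lambda$ (sup-norm), $\ell^\infty(\Lambda)^*_+$ the cone of positive continuous linear functionals on it, and $\mathbf{1}$ the constant function $1$ on $\Lambda$. The family $(f_\lambda)_{\lambda\in\Lambda}\cup(f-f(x^0))$ is the family indexed by $\Lambda\cup\{\mu\}$ ($\mu\notin\Lambda$) whose $\mu$-th member is $f-f(x^0)$. With $\Delta_m:=\{\mathbf t\in\mathbb{R}^m: t_j\ge0,\sum t_j=1\}$, a family $(g_i)_{i\in I}$ of real functions on $X$ is infsup-convex on $X$ if for all $m\ge1$, $\mathbf{t}\in\Delta_m$, $x_1,\dots,x_m\in X$: $\inf_{x\in X}\sup_{i\in I}g_i(x)\le\sup_{i\in I}\sum_{j=1}^m t_j g_i(x_j)$. *)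

theory Defs
  imports "HOL-Analysis.Analysis"
begin

text \<open>The index set Lambda is modelled by a type 'l (automatically nonempty).
  l-infinity(Lambda): bounded real functions on Lambda.\<close>
definition linfty :: "('l \<Rightarrow> real) set" where
  "linfty = {g. bounded (range g)}"

definition pos_dual :: "(('l \<Rightarrow> real) \<Rightarrow> real) set" where
  "pos_dual = {\<Phi>.
     (\<forall>g\<in>linfty. \<forall>h\<in>linfty. \<Phi> (\<lambda>l. g l + h l) = \<Phi> g + \<Phi> h) \<and>
     (\<forall>c. \<forall>g\<in>linfty. \<Phi> (\<lambda>l. c * g l) = c * \<Phi> g) \<and>
     (\<exists>C. \<forall>g\<in>linfty. \<bar>\<Phi> g\<bar> \<le> C * (SUP l. \<bar>g l\<bar>)) \<and>
     (\<forall>g\<in>linfty. (\<forall>l. 0 \<le> g l) \<longrightarrow> 0 \<le> \<Phi> g)}"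

text \<open>Infsup-convexity of a family (g_i) indexed by I on X; infima/suprema
  are taken in the extended reals so that unbounded cases are handled as in the paper.\<close>
definition infsup_convex :: "'x set \<Rightarrow> 'i set \<Rightarrow> ('i \<Rightarrow> 'x \<Rightarrow> real) \<Rightarrow> bool" where
  "infsup_convex X I g \<longleftrightarrow>
     (\<forall>m::nat. \<forall>t::nat \<Rightarrow> real. \<forall>xs::nat \<Rightarrow> 'x.
        m \<ge> 1 \<and> (\<forall>j<m. 0 \<le> t j) \<and> (\<Sum>j<m. t j) = 1 \<and> (\<forall>j<m. xs j \<in> X) \<longrightarrow>
        (INF x\<in>X. SUP i\<in>I. ereal (g i x)) \<le> (SUP i\<in>I. ereal (\<Sum>j<m. t j * g i (xs j))))"

definition feasible_set :: "'x set \<Rightarrow> ('l \<Rightarrow> 'x \<Rightarrow> real) \<Rightarrow> 'x set" where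
  "feasible_set X F = {x\<in>X. (SUP l. F l x) \<le> 0}"

text \<open>The family (f_lambda) together with f - f(x0), indexed by 'l option (None = mu).\<close>
definition ext_family :: "('l \<Rightarrow> 'x \<Rightarrow> real) \<Rightarrow> ('x \<Rightarrow> real) \<Rightarrow> 'x \<Rightarrow> 'l option \<Rightarrow> 'x \<Rightarrow> real" where
  "ext_family F f x0 = (\<lambda>i x. case i of None \<Rightarrow> f x - f x0 | Some l \<Rightarrow> F l x)"

end

theory Submission
  imports Defs
begin

text \<open>
  A sublinear functional that is minimal (pointwise, among sublinear functionals) is odd, hence
  linear, and Zorn's lemma yields a minimal one below any given sublinear p: this is the
  Hahn--Banach theorem. Applied to q(h) = inf {p(h + c) - phi(c) | c in K} it gives the
  Mazur--Orlicz form: a linear L <= p with L >= phi on a convex cone K.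

  Write g(x) in l-infinity(Lambda + {mu}) for the vector (f_lambda(x), f(x) - f(x0)). The
  multipliers (rho, Phi) are exactly the linear functionals L <= sup on l-infinity(Lambda + {mu}),
  via L(h) = rho h(mu) + Phi(h restricted to Lambda), and the saddle point conditions say
  L(g(x)) >= 0 on X. By Mazur--Orlicz (with p = sup and phi = 0) such an L exists iff sup c >= 0
  for all c in the convex cone generated by the g(x). Finally, since inf_x sup_i g_i(x) = 0 by
  optimality of x0, this cone condition is a rescaling of infsup-convexity.
\<close>

section \<open>Sublinear functionals on spaces of real functions\<close>

definition sublinear_on :: "('i \<Rightarrow> real) set \<Rightarrow> (('i \<Rightarrow> real) \<Rightarrow> real) \<Rightarrow> bool" where
  "sublinear_on U p \<longleftrightarrow>
     (\<forall>a\<in>U. \<forall>b\<in>U. p (\<lambda>i. a i + b i) \<le> p a + p b) \<and>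
     (\<forall>c>0. \<forall>a\<in>U. p (\<lambda>i. c * a i) = c * p a)"

definition linear_on :: "('i \<Rightarrow> real) set \<Rightarrow> (('i \<Rightarrow> real) \<Rightarrow> real) \<Rightarrow> bool" where
  "linear_on U L \<longleftrightarrow>
     (\<forall>a\<in>U. \<forall>b\<in>U. L (\<lambda>i. a i + b i) = L a + L b) \<and>
     (\<forall>c. \<forall>a\<in>U. L (\<lambda>i. c * a i) = c * L a)"

lemma linear_on_add: "linear_on U L \<Longrightarrow> a \<in> U \<Longrightarrow> b \<in> U \<Longrightarrow> L (\<lambda>i. a i + b i) = L a + L b"
  unfolding linear_on_def by blast

lemma linear_on_scale: "linear_on U L \<Longrightarrow> a \<in> U \<Longrightarrow> L (\<lambda>i. c * a i) = c * L a"
  unfolding linear_on_def by blast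

lemma linear_on_uminus: "linear_on U L \<Longrightarrow> a \<in> U \<Longrightarrow> L (\<lambda>i. - a i) = - L a"
  using linear_on_scale[of U L a "-1"] by simp

locale function_subspace =
  fixes U :: "('i \<Rightarrow> real) set"
  assumes add_closed: "a \<in> U \<Longrightarrow> b \<in> U \<Longrightarrow> (\<lambda>i. a i + b i) \<in> U"
    and scale_closed: "a \<in> U \<Longrightarrow> (\<lambda>i. c * a i) \<in> U"
    and zero_closed: "(\<lambda>_. 0) \<in> U"
begin

lemma uminus_closed: "a \<in> U \<Longrightarrow> (\<lambda>i. - a i) \<in> U"
  using scale_closed[of a "-1"] by simp

lemma sublinear_on_cong:
  assumes "\<And>h. h \<in> U \<Longrightarrow> p h = q h"
  shows "sublinear_on U p \<longleftrightarrow> sublinear_on U q"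
  unfolding sublinear_on_def by (simp add: assms add_closed scale_closed)

lemma sublinear_on_add:
  "sublinear_on U p \<Longrightarrow> a \<in> U \<Longrightarrow> b \<in> U \<Longrightarrow> p (\<lambda>i. a i + b i) \<le> p a + p b"
  unfolding sublinear_on_def by blast

lemma sublinear_on_pos_scale:
  "sublinear_on U p \<Longrightarrow> a \<in> U \<Longrightarrow> 0 < c \<Longrightarrow> p (\<lambda>i. c * a i) = c * p a"
  unfolding sublinear_on_def by blast

lemma sublinear_on_zero:
  assumes "sublinear_on U p"
  shows "p (\<lambda>_. 0) = 0"
  using sublinear_on_pos_scale[OF assms zero_closed, of 2] by simp

lemma sublinear_on_scale:
  assumes "sublinear_on U p" "a \<in> U" "0 \<le> c"
  shows "p (\<lambda>i. c * a i) = c * p a"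
proof (cases "c = 0")
  case True
  then show ?thesis using sublinear_on_zero[OF assms(1)] by simp
next
  case False
  then show ?thesis using sublinear_on_pos_scale[OF assms(1,2)] assms(3) by simp
qed

lemma sublinear_on_uminus:
  assumes "sublinear_on U p" "a \<in> U"
  shows "- p (\<lambda>i. - a i) \<le> p a"
  using sublinear_on_add[OF assms(1,2) uminus_closed[OF assms(2)]] sublinear_on_zero[OF assms(1)]
  by simp

lemma sublinear_onI:
  assumes add: "\<And>a b. a \<in> U \<Longrightarrow> b \<in> U \<Longrightarrow> p (\<lambda>i. a i + b i) \<le> p a + p b"
    and scale_le: "\<And>s h. 0 < s \<Longrightarrow> h \<in> U \<Longrightarrow> p (\<lambda>i. s * h i) \<le> s * p h"
  shows "sublinear_on U p"
proof -
  have "p (\<lambda>i. s * h i) = s * p h" if "0 < s" "h \<in> U" for s h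
  proof (rule antisym)
    show "p (\<lambda>i. s * h i) \<le> s * p h" using scale_le that .
    have "p h = p (\<lambda>i. (1 / s) * (s * h i))" using \<open>0 < s\<close> by simp
    also have "\<dots> \<le> (1 / s) * p (\<lambda>i. s * h i)"
      using scale_le[of "1 / s" "\<lambda>i. s * h i"] \<open>0 < s\<close> scale_closed[OF \<open>h \<in> U\<close>] by simp
    finally show "s * p h \<le> p (\<lambda>i. s * h i)"
      using \<open>0 < s\<close> by (simp add: field_simps)
  qed
  then show ?thesis unfolding sublinear_on_def using add by blast
qed

end

section \<open>The Hahn--Banach and Mazur--Orlicz theorems\<close>

locale sublinear_shift = function_subspace U for U :: "('i \<Rightarrow> real) set" +
  fixes p :: "('i \<Rightarrow> real) \<Rightarrow> real" and K :: "('i \<Rightarrow> real) set"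
    and \<phi> :: "('i \<Rightarrow> real) \<Rightarrow> real"
  assumes sublinear: "sublinear_on U p"
    and cone_subset: "K \<subseteq> U"
    and zero_cone: "(\<lambda>_. 0) \<in> K"
    and add_cone: "c \<in> K \<Longrightarrow> d \<in> K \<Longrightarrow> (\<lambda>i. c i + d i) \<in> K"
    and scale_cone: "c \<in> K \<Longrightarrow> 0 < s \<Longrightarrow> (\<lambda>i. s * c i) \<in> K"
    and superadditive: "c \<in> K \<Longrightarrow> d \<in> K \<Longrightarrow> \<phi> c + \<phi> d \<le> \<phi> (\<lambda>i. c i + d i)"
    and homogeneous: "c \<in> K \<Longrightarrow> 0 < s \<Longrightarrow> \<phi> (\<lambda>i. s * c i) = s * \<phi> c"
    and minorant: "c \<in> K \<Longrightarrow> \<phi> c \<le> p c"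
begin

definition shift_inf :: "('i \<Rightarrow> real) \<Rightarrow> real" where
  "shift_inf h = (INF c\<in>K. p (\<lambda>i. h i + c i) - \<phi> c)"

lemma phi_zero: "\<phi> (\<lambda>_. 0) = 0"
  using homogeneous[OF zero_cone, of 2] by simp

lemma shift_inf_lower_bound:
  assumes "h \<in> U" "c \<in> K"
  shows "- p (\<lambda>i. - h i) \<le> p (\<lambda>i. h i + c i) - \<phi> c"
proof -
  have "c \<in> U" using assms(2) cone_subset by blast
  have "p (\<lambda>i. (h i + c i) + - h i) \<le> p (\<lambda>i. h i + c i) + p (\<lambda>i. - h i)"
    by (rule sublinear_on_add[OF sublinear add_closed[OF \<open>h \<in> U\<close> \<open>c \<in> U\<close>] uminus_closed[OF \<open>h \<in> U\<close>]])
  then show ?thesis using minorant[OF \<open>c \<in> K\<close>] by simp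
qed

lemma shift_inf_le: "h \<in> U \<Longrightarrow> c \<in> K \<Longrightarrow> shift_inf h \<le> p (\<lambda>i. h i + c i) - \<phi> c"
  unfolding shift_inf_def by (rule cINF_lower[OF bdd_belowI2[OF shift_inf_lower_bound]])

lemma shift_inf_greatest:
  "(\<And>c. c \<in> K \<Longrightarrow> y \<le> p (\<lambda>i. h i + c i) - \<phi> c) \<Longrightarrow> y \<le> shift_inf h"
  unfolding shift_inf_def using zero_cone by (intro cINF_greatest) auto

lemma shift_inf_le_self: "h \<in> U \<Longrightarrow> shift_inf h \<le> p h"
  using shift_inf_le[OF _ zero_cone] phi_zero by simp

lemma shift_inf_uminus:
  assumes "c \<in> K"
  shows "shift_inf (\<lambda>i. - c i) \<le> - \<phi> c"
proof -
  have "shift_inf (\<lambda>i. - c i) \<le> p (\<lambda>i. - c i + c i) - \<phi> c"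
    using shift_inf_le[OF uminus_closed assms] assms cone_subset by blast
  then show ?thesis using sublinear_on_zero[OF sublinear] by simp
qed

lemma shift_inf_add:
  assumes "h1 \<in> U" "h2 \<in> U"
  shows "shift_inf (\<lambda>i. h1 i + h2 i) \<le> shift_inf h1 + shift_inf h2"
proof -
  have split: "shift_inf (\<lambda>i. h1 i + h2 i)
      \<le> (p (\<lambda>i. h1 i + c1 i) - \<phi> c1) + (p (\<lambda>i. h2 i + c2 i) - \<phi> c2)"
    if "c1 \<in> K" "c2 \<in> K" for c1 c2
  proof -
    have c: "c1 \<in> U" "c2 \<in> U" using that cone_subset by blast+
    have "shift_inf (\<lambda>i. h1 i + h2 i)
        \<le> p (\<lambda>i. (h1 i + h2 i) + (c1 i + c2 i)) - \<phi> (\<lambda>i. c1 i + c2 i)"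
      by (rule shift_inf_le[OF add_closed[OF assms] add_cone[OF that]])
    also have "(\<lambda>i. (h1 i + h2 i) + (c1 i + c2 i)) = (\<lambda>i. (h1 i + c1 i) + (h2 i + c2 i))"
      by (simp add: algebra_simps)
    also have "p \<dots> \<le> p (\<lambda>i. h1 i + c1 i) + p (\<lambda>i. h2 i + c2 i)"
      by (rule sublinear_on_add[OF sublinear add_closed[OF assms(1) c(1)] add_closed[OF assms(2) c(2)]])
    finally show ?thesis using superadditive[OF that] by linarith
  qed
  have "shift_inf (\<lambda>i. h1 i + h2 i) - (p (\<lambda>i. h2 i + c2 i) - \<phi> c2) \<le> shift_inf h1"
    if "c2 \<in> K" for c2
  proof (rule shift_inf_greatest)
    fix c1 assume "c1 \<in> K"
    with split[OF this that] show "shift_inf (\<lambda>i. h1 i + h2 i) - (p (\<lambda>i. h2 i + c2 i) - \<phi> c2)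
        \<le> p (\<lambda>i. h1 i + c1 i) - \<phi> c1"
      by linarith
  qed
  then have "shift_inf (\<lambda>i. h1 i + h2 i) - shift_inf h1 \<le> shift_inf h2"
    by (intro shift_inf_greatest) (simp add: algebra_simps)
  then show ?thesis by simp
qed

lemma shift_inf_scale_le:
  assumes "0 < s" "h \<in> U"
  shows "shift_inf (\<lambda>i. s * h i) \<le> s * shift_inf h"
proof -
  have "shift_inf (\<lambda>i. s * h i) / s \<le> shift_inf h"
  proof (rule shift_inf_greatest)
    fix c assume "c \<in> K"
    then have "c \<in> U" using cone_subset by blast
    have "shift_inf (\<lambda>i. s * h i) \<le> p (\<lambda>i. s * h i + s * c i) - \<phi> (\<lambda>i. s * c i)"
      by (rule shift_inf_le[OF scale_closed[OF assms(2)] scale_cone[OF \<open>c \<in> K\<close> assms(1)]])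
    also have "(\<lambda>i. s * h i + s * c i) = (\<lambda>i. s * (h i + c i))"
      by (simp add: algebra_simps)
    also have "p \<dots> = s * p (\<lambda>i. h i + c i)"
      using sublinear_on_scale[OF sublinear add_closed[OF assms(2) \<open>c \<in> U\<close>]] assms(1) by simp
    also have "\<phi> (\<lambda>i. s * c i) = s * \<phi> c"
      by (rule homogeneous[OF \<open>c \<in> K\<close> assms(1)])
    finally show "shift_inf (\<lambda>i. s * h i) / s \<le> p (\<lambda>i. h i + c i) - \<phi> c"
      using assms(1) by (simp add: field_simps)
  qed
  then show ?thesis using assms(1) by (simp add: field_simps)
qed

lemma sublinear_shift_inf: "sublinear_on U shift_inf"
  by (rule sublinear_onI[OF shift_inf_add shift_inf_scale_le])

end

context function_subspace
begin

lemma minimal_sublinear_on_uminus: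
  assumes m: "sublinear_on U m"
    and minimal: "\<And>r. sublinear_on U r \<Longrightarrow> \<forall>h\<in>U. r h \<le> m h \<Longrightarrow> \<forall>h\<in>U. r h = m h"
    and "a \<in> U"
  shows "m (\<lambda>i. - a i) = - m a"
proof -
  \<comment> \<open>Shifting \<open>m\<close> along the ray through \<open>a\<close> gives a sublinear functional below \<open>m\<close>, so equal to it;
    at \<open>-a\<close> this yields \<open>m(-a) \<le> -m(a)\<close>.\<close>
  define ray where "ray = {(\<lambda>i. t * a i) | t. 0 \<le> t}"
  have m_ray: "m (\<lambda>i. t * a i) = t * m a" if "0 \<le> t" for t
    using sublinear_on_scale[OF m \<open>a \<in> U\<close> that] .
  interpret ray: sublinear_shift U m ray m
  proof unfold_locales
    show "(\<lambda>i. c i + d i) \<in> ray" "m c + m d \<le> m (\<lambda>i. c i + d i)" if "c \<in> ray" "d \<in> ray" for c d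
    proof -
      from that obtain t u where tu: "0 \<le> t" "0 \<le> u" and "c = (\<lambda>i. t * a i)" "d = (\<lambda>i. u * a i)"
        by (auto simp: ray_def)
      then have cd: "(\<lambda>i. c i + d i) = (\<lambda>i. (t + u) * a i)"
        by (simp add: algebra_simps)
      show "(\<lambda>i. c i + d i) \<in> ray" unfolding cd ray_def using tu by force
      have "m c = t * m a" "m d = u * m a" "m (\<lambda>i. c i + d i) = (t + u) * m a"
        unfolding cd using m_ray tu \<open>c = _\<close> \<open>d = _\<close> by simp_all
      then show "m c + m d \<le> m (\<lambda>i. c i + d i)" by (simp add: distrib_right)
    qed
    show "(\<lambda>i. s * c i) \<in> ray" "m (\<lambda>i. s * c i) = s * m c" if "c \<in> ray" "0 < s" for c s
    proof -
      from that obtain t where "0 \<le> t" "c = (\<lambda>i. t * a i)" by (auto simp: ray_def)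
      moreover have "(\<lambda>i. s * (t * a i)) = (\<lambda>i. (s * t) * a i)" by (simp add: algebra_simps)
      ultimately show "(\<lambda>i. s * c i) \<in> ray" "m (\<lambda>i. s * c i) = s * m c"
        using m_ray \<open>0 < s\<close> by (auto simp: ray_def)
    qed
  qed (use m \<open>a \<in> U\<close> scale_closed in \<open>auto simp: ray_def intro: exI[of _ 0]\<close>)
  have "\<forall>h\<in>U. ray.shift_inf h = m h"
    using minimal ray.sublinear_shift_inf ray.shift_inf_le_self by blast
  moreover have "ray.shift_inf (\<lambda>i. - a i) \<le> - m a"
    using ray.shift_inf_uminus[of a] by (force simp: ray_def)
  ultimately have "m (\<lambda>i. - a i) \<le> - m a" using uminus_closed[OF \<open>a \<in> U\<close>] by simp
  then show ?thesis using sublinear_on_uminus[OF m \<open>a \<in> U\<close>] by linarith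
qed

lemma sublinear_on_INF_chain:
  assumes "C \<noteq> {}" and sublinear: "\<And>r. r \<in> C \<Longrightarrow> sublinear_on U r"
    and chain: "\<And>r s. r \<in> C \<Longrightarrow> s \<in> C \<Longrightarrow> (\<forall>h\<in>U. r h \<le> s h) \<or> (\<forall>h\<in>U. s h \<le> r h)"
    and bdd: "\<And>h. h \<in> U \<Longrightarrow> bdd_below ((\<lambda>r. r h) ` C)"
  shows "sublinear_on U (\<lambda>h. INF r\<in>C. r h)"
proof -
  let ?R = "\<lambda>h. INF r\<in>C. r h"
  have lower: "?R h \<le> r h" if "r \<in> C" "h \<in> U" for r h
    using cINF_lower[OF bdd[OF that(2)] that(1)] .
  have add: "?R (\<lambda>i. h1 i + h2 i) \<le> ?R h1 + ?R h2" if "h1 \<in> U" "h2 \<in> U" for h1 h2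
  proof -
    have "?R (\<lambda>i. h1 i + h2 i) \<le> r1 h1 + r2 h2" if "r1 \<in> C" "r2 \<in> C" for r1 r2
    proof -
      obtain r where "r \<in> C" "r h1 \<le> r1 h1" "r h2 \<le> r2 h2"
      proof (cases "\<forall>h\<in>U. r1 h \<le> r2 h")
        case True
        then show thesis using that(1) \<open>r1 \<in> C\<close> \<open>h2 \<in> U\<close> by blast
      next
        case False
        then have "\<forall>h\<in>U. r2 h \<le> r1 h" using chain[OF \<open>r1 \<in> C\<close> \<open>r2 \<in> C\<close>] by blast
        then show thesis using that(1) \<open>r2 \<in> C\<close> \<open>h1 \<in> U\<close> by blast
      qed
      have "?R (\<lambda>i. h1 i + h2 i) \<le> r (\<lambda>i. h1 i + h2 i)"
        using lower[OF \<open>r \<in> C\<close> add_closed[OF \<open>h1 \<in> U\<close> \<open>h2 \<in> U\<close>]] .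
      also have "\<dots> \<le> r h1 + r h2"
        using sublinear_on_add[OF sublinear[OF \<open>r \<in> C\<close>] \<open>h1 \<in> U\<close> \<open>h2 \<in> U\<close>] .
      finally show ?thesis using \<open>r h1 \<le> r1 h1\<close> \<open>r h2 \<le> r2 h2\<close> by linarith
    qed
    then have "?R (\<lambda>i. h1 i + h2 i) - r2 h2 \<le> ?R h1" if "r2 \<in> C" for r2
      using that \<open>C \<noteq> {}\<close> by (intro cINF_greatest) (auto simp: algebra_simps)
    then have "?R (\<lambda>i. h1 i + h2 i) - ?R h1 \<le> ?R h2"
      using \<open>C \<noteq> {}\<close> by (intro cINF_greatest) (auto simp: algebra_simps)
    then show ?thesis by simp
  qed
  have scale_le: "?R (\<lambda>i. s * h i) \<le> s * ?R h" if "0 < s" "h \<in> U" for s h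
  proof -
    have "?R (\<lambda>i. s * h i) / s \<le> ?R h"
    proof (rule cINF_greatest[OF \<open>C \<noteq> {}\<close>])
      fix r assume "r \<in> C"
      have "?R (\<lambda>i. s * h i) \<le> r (\<lambda>i. s * h i)"
        using lower[OF \<open>r \<in> C\<close> scale_closed[OF \<open>h \<in> U\<close>]] .
      also have "\<dots> = s * r h"
        using sublinear_on_pos_scale[OF sublinear[OF \<open>r \<in> C\<close>] \<open>h \<in> U\<close> \<open>0 < s\<close>] .
      finally show "?R (\<lambda>i. s * h i) / s \<le> r h" using \<open>0 < s\<close> by (simp add: field_simps)
    qed
    then show ?thesis using \<open>0 < s\<close> by (simp add: field_simps)
  qed
  show ?thesis by (rule sublinear_onI[OF add scale_le])
qed

lemma ex_minimal_sublinear_on: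
  assumes p: "sublinear_on U p"
  obtains m where "sublinear_on U m" "\<forall>h\<in>U. m h \<le> p h"
    "\<And>r. sublinear_on U r \<Longrightarrow> \<forall>h\<in>U. r h \<le> m h \<Longrightarrow> \<forall>h\<in>U. r h = m h"
proof -
  let ?restrict = "\<lambda>r h. if h \<in> U then r h else 0"
  have restrict: "sublinear_on U (?restrict r) \<longleftrightarrow> sublinear_on U r" for r
    by (rule sublinear_on_cong) simp
  \<comment> \<open>Functionals are normalised to vanish outside \<open>U\<close>, making the pointwise order antisymmetric.\<close>
  define A where "A = {r. sublinear_on U r \<and> (\<forall>h\<in>U. r h \<le> p h) \<and> (\<forall>h. h \<notin> U \<longrightarrow> r h = 0)}"
  define P where "P r s \<longleftrightarrow> (\<forall>h. s h \<le> r h)" for r s :: "('i \<Rightarrow> real) \<Rightarrow> real"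
  have po: "partial_order_on A (relation_of P A)"
    unfolding partial_order_on_def preorder_on_def refl_on_def trans_on_def antisym_on_def
      relation_of_def P_def
    by (auto intro: order_trans antisym simp: fun_eq_iff)
  have lower: "- p (\<lambda>i. - h i) \<le> r h" if "r \<in> A" "h \<in> U" for r h
    using sublinear_on_uminus[of r h] uminus_closed[of h] that by (force simp: A_def)
  have chain_bound: "\<exists>u\<in>A. \<forall>r\<in>C. P r u" if C: "C \<in> Chains (relation_of P A)" for C
  proof (cases "C = {}")
    case True
    have "?restrict p \<in> A" using restrict p by (simp add: A_def)
    then show ?thesis using True by blast
  next
    case False
    have "C \<subseteq> A" using C by (auto simp: Chains_def relation_of_def)
    have bdd: "bdd_below ((\<lambda>r. r h) ` C)" if "h \<in> U" for h
      using lower \<open>C \<subseteq> A\<close> that by (intro bdd_belowI2[where m = "- p (\<lambda>i. - h i)"]) blast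
    have INF_le: "(INF r\<in>C. r h) \<le> r h" if "r \<in> C" "h \<in> U" for r h
      using cINF_lower[OF bdd[OF that(2)] that(1)] .
    have "sublinear_on U (\<lambda>h. INF r\<in>C. r h)"
    proof (rule sublinear_on_INF_chain[OF False _ _ bdd])
      show "sublinear_on U r" if "r \<in> C" for r using that \<open>C \<subseteq> A\<close> by (auto simp: A_def)
      show "(\<forall>h\<in>U. r h \<le> s h) \<or> (\<forall>h\<in>U. s h \<le> r h)" if "r \<in> C" "s \<in> C" for r s
        using C that by (auto simp: Chains_def relation_of_def P_def)
    qed
    moreover obtain r0 where "r0 \<in> C" using False by blast
    then have "(INF r\<in>C. r h) \<le> p h" if "h \<in> U" for h
      using INF_le[OF \<open>r0 \<in> C\<close> that] \<open>C \<subseteq> A\<close> that by (force simp: A_def)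
    ultimately have "?restrict (\<lambda>h. INF r\<in>C. r h) \<in> A"
      using restrict by (simp add: A_def)
    moreover have "\<forall>r\<in>C. P r (?restrict (\<lambda>h. INF r\<in>C. r h))"
      using INF_le \<open>C \<subseteq> A\<close> by (auto simp: P_def A_def)
    ultimately show ?thesis by blast
  qed
  obtain m where "m \<in> A" and maximal: "\<And>r. r \<in> A \<Longrightarrow> P m r \<Longrightarrow> r = m"
    using predicate_Zorn[OF po chain_bound] by blast
  show thesis
  proof (rule that)
    show "sublinear_on U m" "\<forall>h\<in>U. m h \<le> p h" using \<open>m \<in> A\<close> by (auto simp: A_def)
    fix r assume "sublinear_on U r" and r_le: "\<forall>h\<in>U. r h \<le> m h"
    moreover have "\<forall>h\<in>U. r h \<le> p h"
      using r_le \<open>m \<in> A\<close> unfolding A_def by (blast intro: order_trans)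
    ultimately have "?restrict r \<in> A"
      using restrict by (simp add: A_def)
    moreover have "P m (?restrict r)"
      using r_le \<open>m \<in> A\<close> by (simp add: P_def A_def)
    ultimately have "?restrict r = m" by (rule maximal)
    then show "\<forall>h\<in>U. r h = m h" by (auto dest: fun_cong)
  qed
qed

theorem hahn_banach:
  assumes "sublinear_on U p"
  obtains L where "linear_on U L" "\<forall>h\<in>U. L h \<le> p h"
proof -
  obtain m where m: "sublinear_on U m" "\<forall>h\<in>U. m h \<le> p h"
    and minimal: "\<And>r. sublinear_on U r \<Longrightarrow> \<forall>h\<in>U. r h \<le> m h \<Longrightarrow> \<forall>h\<in>U. r h = m h"
    using ex_minimal_sublinear_on[OF assms] by blast
  have odd: "m (\<lambda>i. - a i) = - m a" if "a \<in> U" for a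
    using minimal_sublinear_on_uminus[OF m(1) minimal that] by blast
  have "m (\<lambda>i. a i + b i) = m a + m b" if "a \<in> U" "b \<in> U" for a b
  proof -
    have "- m (\<lambda>i. a i + b i) = m (\<lambda>i. - a i + - b i)"
      using odd[OF add_closed[OF that]] by simp
    also have "\<dots> \<le> - m a - m b"
      using sublinear_on_add[OF m(1) uminus_closed uminus_closed] odd that by simp
    finally show ?thesis using sublinear_on_add[OF m(1) that] by linarith
  qed
  moreover have "m (\<lambda>i. c * a i) = c * m a" if "a \<in> U" for c a
  proof (cases "0 \<le> c")
    case True
    then show ?thesis using sublinear_on_scale[OF m(1) that] by simp
  next
    case False
    have "m (\<lambda>i. c * a i) = m (\<lambda>i. (- c) * - a i)" by simp
    also have "\<dots> = (- c) * m (\<lambda>i. - a i)"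
      using sublinear_on_scale[OF m(1) uminus_closed[OF that], of "- c"] False by simp
    finally show ?thesis using odd[OF that] by simp
  qed
  ultimately show thesis using that m(2) unfolding linear_on_def by blast
qed

end

context sublinear_shift
begin

theorem mazur_orlicz:
  obtains L where "linear_on U L" "\<forall>h\<in>U. L h \<le> p h" "\<forall>c\<in>K. \<phi> c \<le> L c"
proof -
  obtain L where L: "linear_on U L" "\<forall>h\<in>U. L h \<le> shift_inf h"
    using hahn_banach[OF sublinear_shift_inf] by blast
  have "\<phi> c \<le> L c" if "c \<in> K" for c
  proof -
    have "c \<in> U" using that cone_subset by blast
    have "- L c = L (\<lambda>i. - c i)" using linear_on_uminus[OF L(1) \<open>c \<in> U\<close>] by simp
    also have "\<dots> \<le> shift_inf (\<lambda>i. - c i)" using L(2) uminus_closed[OF \<open>c \<in> U\<close>] by blast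
    also have "\<dots> \<le> - \<phi> c" using shift_inf_uminus[OF that] .
    finally show ?thesis by simp
  qed
  then show thesis using that L shift_inf_le_self by force
qed

end

section \<open>Cones generated by a family of functions\<close>

inductive_set generated_cone :: "('x \<Rightarrow> 'i \<Rightarrow> real) \<Rightarrow> 'x set \<Rightarrow> ('i \<Rightarrow> real) set"
  for G X where
    zero: "(\<lambda>_. 0) \<in> generated_cone G X"
  | add_generator: "c \<in> generated_cone G X \<Longrightarrow> x \<in> X \<Longrightarrow> 0 \<le> t \<Longrightarrow>
      (\<lambda>i. c i + t * G x i) \<in> generated_cone G X"

lemma generated_cone_add:
  "d \<in> generated_cone G X \<Longrightarrow> c \<in> generated_cone G X \<Longrightarrow> (\<lambda>i. c i + d i) \<in> generated_cone G X"
proof (induction d rule: generated_cone.induct)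
  case (add_generator d x t)
  then have "(\<lambda>i. (c i + d i) + t * G x i) \<in> generated_cone G X"
    by (intro generated_cone.add_generator) auto
  then show ?case by (simp add: add.assoc)
qed simp

lemma generated_cone_scale:
  "c \<in> generated_cone G X \<Longrightarrow> 0 \<le> s \<Longrightarrow> (\<lambda>i. s * c i) \<in> generated_cone G X"
proof (induction c rule: generated_cone.induct)
  case zero
  then show ?case using generated_cone.zero by simp
next
  case (add_generator c x t)
  then have "(\<lambda>i. s * c i + (s * t) * G x i) \<in> generated_cone G X"
    by (intro generated_cone.add_generator) auto
  then show ?case by (simp add: algebra_simps)
qed

lemma sum_in_generated_cone:
  fixes m :: nat
  assumes "\<forall>j<m. 0 \<le> t j \<and> xs j \<in> X"
  shows "(\<lambda>i. \<Sum>j<m. t j * G (xs j) i) \<in> generated_cone G X"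
  using assms
proof (induction m)
  case 0
  then show ?case using generated_cone.zero by simp
next
  case (Suc m)
  then show ?case using generated_cone.add_generator[of _ G X "xs m" "t m"] by simp
qed

lemma generated_cone_iff_sum:
  "c \<in> generated_cone G X \<longleftrightarrow>
     (\<exists>(m::nat) t xs. (\<forall>j<m. 0 \<le> t j \<and> xs j \<in> X) \<and> c = (\<lambda>i. \<Sum>j<m. t j * G (xs j) i))"
proof
  assume "c \<in> generated_cone G X"
  then show "\<exists>(m::nat) t xs. (\<forall>j<m. 0 \<le> t j \<and> xs j \<in> X) \<and> c = (\<lambda>i. \<Sum>j<m. t j * G (xs j) i)"
  proof (induction c rule: generated_cone.induct)
    case zero
    have "(\<lambda>_. 0) = (\<lambda>i. \<Sum>j<0::nat. t j * G (xs j) i)" for t xs by simp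
    then show ?case by blast
  next
    case (add_generator c x s)
    from add_generator.IH obtain m :: nat and t xs where t_xs: "\<forall>j<m. 0 \<le> t j \<and> xs j \<in> X"
      and c: "c = (\<lambda>i. \<Sum>j<m. t j * G (xs j) i)"
      by blast
    have "(\<Sum>j<m. (t(m := s)) j * G ((xs(m := x)) j) i) = (\<Sum>j<m. t j * G (xs j) i)" for i
      by (rule sum.cong) auto
    then have "(\<lambda>i. c i + s * G x i) = (\<lambda>i. \<Sum>j<Suc m. (t(m := s)) j * G ((xs(m := x)) j) i)"
      by (simp add: c)
    moreover have "\<forall>j<Suc m. 0 \<le> (t(m := s)) j \<and> (xs(m := x)) j \<in> X"
      using t_xs add_generator.hyps by (simp add: less_Suc_eq)
    ultimately show ?case by blast
  qed
qed (auto intro: sum_in_generated_cone)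

context function_subspace
begin

lemma generated_cone_subset: "G ` X \<subseteq> U \<Longrightarrow> generated_cone G X \<subseteq> U"
proof
  fix c assume "c \<in> generated_cone G X" "G ` X \<subseteq> U"
  then show "c \<in> U"
  proof (induction c rule: generated_cone.induct)
    case (add_generator c x t)
    then have "G x \<in> U" by blast
    then show ?case using add_closed[OF add_generator.IH scale_closed] add_generator.prems by blast
  qed (rule zero_closed)
qed

lemma linear_on_generated_cone_nonneg:
  assumes "linear_on U L" "G ` X \<subseteq> U" "\<forall>x\<in>X. 0 \<le> L (G x)"
  shows "c \<in> generated_cone G X \<Longrightarrow> 0 \<le> L c"
proof (induction c rule: generated_cone.induct)
  case zero
  then show ?case using linear_on_scale[OF assms(1) zero_closed, of 0] by simp
next
  case (add_generator c x t)
  have "c \<in> U" using generated_cone_subset[OF assms(2)] add_generator.hyps(1) by blast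
  have "G x \<in> U" using assms(2) add_generator.hyps(2) by blast
  then have "L (\<lambda>i. c i + t * G x i) = L c + t * L (G x)"
    using linear_on_add[OF assms(1) \<open>c \<in> U\<close> scale_closed] linear_on_scale[OF assms(1)] by simp
  then show ?case using add_generator assms(3) by simp
qed

end

section \<open>Bounded functions and positive functionals\<close>

lemma linfty_iff: "g \<in> linfty \<longleftrightarrow> (\<exists>B. \<forall>l. \<bar>g l\<bar> \<le> B)"
  unfolding linfty_def bounded_iff by auto

lemma linfty_const: "(\<lambda>_. c) \<in> linfty"
  unfolding linfty_iff by auto

lemma linfty_compose: "g \<in> linfty \<Longrightarrow> (\<lambda>l. g (k l)) \<in> linfty"
  unfolding linfty_iff by auto

lemma function_subspace_linfty: "function_subspace linfty"
proof
  show "(\<lambda>i. a i + b i) \<in> linfty" if "a \<in> linfty" "b \<in> linfty" for a b :: "'i \<Rightarrow> real"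
  proof -
    from that obtain A B where "\<forall>i. \<bar>a i\<bar> \<le> A" "\<forall>i. \<bar>b i\<bar> \<le> B"
      unfolding linfty_iff by blast
    then have "\<forall>i. \<bar>a i + b i\<bar> \<le> A + B"
      by (meson abs_triangle_ineq add_mono order_trans)
    then show ?thesis unfolding linfty_iff by blast
  qed
  show "(\<lambda>i. c * a i) \<in> linfty" if "a \<in> linfty" for a :: "'i \<Rightarrow> real" and c
  proof -
    from that obtain A where "\<forall>i. \<bar>a i\<bar> \<le> A" unfolding linfty_iff by blast
    then have "\<forall>i. \<bar>c * a i\<bar> \<le> \<bar>c\<bar> * A" by (simp add: abs_mult mult_left_mono)
    then show ?thesis unfolding linfty_iff by blast
  qed
qed (rule linfty_const)

interpretation linfty: function_subspace linfty
  by (rule function_subspace_linfty)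

lemma linfty_bounds:
  assumes "h \<in> linfty"
  obtains B where "\<And>i. - B \<le> h i" "\<And>i. h i \<le> B"
  using assms unfolding linfty_iff abs_le_iff by (metis minus_le_iff)

lemma linfty_bdd_above: "h \<in> linfty \<Longrightarrow> bdd_above (range h)"
  by (metis linfty_bounds bdd_aboveI2)

lemma linfty_SUP_upper: "h \<in> linfty \<Longrightarrow> h i \<le> (SUP i. h i)"
  by (rule cSUP_upper[OF _ linfty_bdd_above]) auto

lemma linfty_ereal_SUP: "h \<in> linfty \<Longrightarrow> (SUP i. ereal (h i)) = ereal (SUP i. h i)"
proof -
  assume "h \<in> linfty"
  then obtain B where "\<And>i. - B \<le> h i" "\<And>i. h i \<le> B" by (rule linfty_bounds) blast
  then have "\<bar>SUP i. ereal (h i)\<bar> \<noteq> \<infinity>"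
    by (intro ereal_SUP_not_infty[where l = "ereal (- B)" and u = "ereal B"]) auto
  then show ?thesis by (simp add: ereal_SUP)
qed

lemma sublinear_on_SUP: "sublinear_on linfty (\<lambda>h. SUP i. h i)"
proof (rule linfty.sublinear_onI)
  fix a b :: "'i \<Rightarrow> real" assume "a \<in> linfty" "b \<in> linfty"
  then show "(SUP i. a i + b i) \<le> (SUP i. a i) + (SUP i. b i)"
    by (intro cSUP_least) (auto intro: add_mono linfty_SUP_upper)
next
  fix s :: real and h :: "'i \<Rightarrow> real" assume "0 < s" "h \<in> linfty"
  then show "(SUP i. s * h i) \<le> s * (SUP i. h i)"
    by (intro cSUP_least) (auto intro: mult_left_mono linfty_SUP_upper)
qed

lemma linear_on_linfty_le_SUP_iff:
  fixes L :: "('i \<Rightarrow> real) \<Rightarrow> real"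
  assumes L: "linear_on linfty L"
  shows "(\<forall>h\<in>linfty. L h \<le> (SUP i. h i)) \<longleftrightarrow>
    (\<forall>h\<in>linfty. (\<forall>i. 0 \<le> h i) \<longrightarrow> 0 \<le> L h) \<and> L (\<lambda>_. 1) = 1"
proof
  assume dom: "\<forall>h\<in>linfty. L h \<le> (SUP i. h i)"
  have nonneg: "0 \<le> L h" if "h \<in> linfty" "\<forall>i. 0 \<le> h i" for h
  proof -
    have "L (\<lambda>i. - h i) \<le> (SUP i. - h i)" using dom linfty.uminus_closed[OF that(1)] by blast
    also have "\<dots> \<le> 0" using that(2) by (intro cSUP_least) auto
    finally show ?thesis using linear_on_uminus[OF L that(1)] by simp
  qed
  have "L (\<lambda>_. 1) \<le> 1" "L (\<lambda>i. - 1) \<le> - 1"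
    using dom linfty_const[of 1] linfty_const[of "- 1"] by fastforce+
  moreover have "L (\<lambda>i. - 1) = - L (\<lambda>_. 1)" using linear_on_uminus[OF L linfty_const] .
  ultimately show "(\<forall>h\<in>linfty. (\<forall>i. 0 \<le> h i) \<longrightarrow> 0 \<le> L h) \<and> L (\<lambda>_. 1) = 1"
    using nonneg by auto
next
  assume "(\<forall>h\<in>linfty. (\<forall>i. 0 \<le> h i) \<longrightarrow> 0 \<le> L h) \<and> L (\<lambda>_. 1) = 1"
  then have nonneg: "\<And>h. h \<in> linfty \<Longrightarrow> \<forall>i. 0 \<le> h i \<Longrightarrow> 0 \<le> L h" and one: "L (\<lambda>_. 1) = 1"
    by auto
  show "\<forall>h\<in>linfty. L h \<le> (SUP i. h i)"
  proof
    fix h :: "'i \<Rightarrow> real" assume h: "h \<in> linfty"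
    define S where "S = (SUP i. h i)"
    have gap: "(\<lambda>i. S + - h i) \<in> linfty"
      using linfty.add_closed[OF linfty_const linfty.uminus_closed[OF h]] .
    have "0 \<le> L (\<lambda>i. S + - h i)"
      using nonneg[OF gap] linfty_SUP_upper[OF h] by (simp add: S_def)
    also have "\<dots> = L (\<lambda>_. S) + L (\<lambda>i. - h i)"
      by (rule linear_on_add[OF L linfty_const linfty.uminus_closed[OF h]])
    also have "L (\<lambda>_. S) = S"
      using linear_on_scale[OF L linfty_const[of 1], of S] one by simp
    finally show "L h \<le> (SUP i. h i)" using linear_on_uminus[OF L h] by (simp add: S_def)
  qed
qed

lemma pos_dual_linear_on: "\<Phi> \<in> pos_dual \<Longrightarrow> linear_on linfty \<Phi>"
  unfolding pos_dual_def linear_on_def by blast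

lemma pos_dual_nonneg: "\<Phi> \<in> pos_dual \<Longrightarrow> g \<in> linfty \<Longrightarrow> (\<And>l. 0 \<le> g l) \<Longrightarrow> 0 \<le> \<Phi> g"
  unfolding pos_dual_def by blast

lemma pos_dual_nonpos:
  assumes "\<Phi> \<in> pos_dual" "g \<in> linfty" "\<And>l. g l \<le> 0"
  shows "\<Phi> g \<le> 0"
proof -
  have "0 \<le> \<Phi> (\<lambda>l. - g l)"
    using pos_dual_nonneg[OF assms(1) linfty.uminus_closed[OF assms(2)]] assms(3) by simp
  then show ?thesis using linear_on_uminus[OF pos_dual_linear_on[OF assms(1)] assms(2)] by simp
qed

lemma linfty_abs_SUP_upper: "g \<in> linfty \<Longrightarrow> \<bar>g l\<bar> \<le> (SUP l. \<bar>g l\<bar>)"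
  by (rule linfty_SUP_upper) (auto simp: linfty_iff)

lemma linfty_case_option: "\<phi> \<in> linfty \<Longrightarrow> case_option c \<phi> \<in> linfty"
proof -
  assume "\<phi> \<in> linfty"
  then obtain B where "\<forall>l. \<bar>\<phi> l\<bar> \<le> B" unfolding linfty_iff by blast
  then have "\<forall>i. \<bar>case_option c \<phi> i\<bar> \<le> max \<bar>c\<bar> B"
    by (auto split: option.split intro: le_max_iff_disj[THEN iffD2])
  then show ?thesis unfolding linfty_iff by blast
qed

lemma SUP_dominated_restrict_pos_dual:
  fixes L :: "('l option \<Rightarrow> real) \<Rightarrow> real"
  assumes L: "linear_on linfty L" and dom: "\<forall>h\<in>linfty. L h \<le> (SUP i. h i)"
  shows "(\<lambda>\<phi>. L (case_option 0 \<phi>)) \<in> pos_dual"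
  unfolding pos_dual_def
proof (intro CollectI conjI ballI allI impI)
  fix \<phi> \<psi> :: "'l \<Rightarrow> real" assume "\<phi> \<in> linfty" "\<psi> \<in> linfty"
  have "case_option 0 (\<lambda>l. \<phi> l + \<psi> l) = (\<lambda>i. case_option 0 \<phi> i + case_option 0 \<psi> i)"
    by (auto simp: fun_eq_iff split: option.split)
  then show "L (case_option 0 (\<lambda>l. \<phi> l + \<psi> l)) = L (case_option 0 \<phi>) + L (case_option 0 \<psi>)"
    using linear_on_add[OF L linfty_case_option linfty_case_option] \<open>\<phi> \<in> linfty\<close> \<open>\<psi> \<in> linfty\<close>
    by simp
next
  fix c and \<phi> :: "'l \<Rightarrow> real" assume "\<phi> \<in> linfty"
  have "case_option 0 (\<lambda>l. c * \<phi> l) = (\<lambda>i. c * case_option 0 \<phi> i)"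
    by (auto simp: fun_eq_iff split: option.split)
  then show "L (case_option 0 (\<lambda>l. c * \<phi> l)) = c * L (case_option 0 \<phi>)"
    using linear_on_scale[OF L linfty_case_option[OF \<open>\<phi> \<in> linfty\<close>]] by simp
next
  fix \<phi> :: "'l \<Rightarrow> real" assume "\<phi> \<in> linfty" "\<forall>l. 0 \<le> \<phi> l"
  moreover have "\<forall>i. 0 \<le> case_option 0 \<phi> i" using \<open>\<forall>l. 0 \<le> \<phi> l\<close> by (simp split: option.split)
  ultimately show "0 \<le> L (case_option 0 \<phi>)"
    using dom linfty_case_option[OF \<open>\<phi> \<in> linfty\<close>] unfolding linear_on_linfty_le_SUP_iff[OF L]
    by blast
next
  show "\<exists>C. \<forall>\<phi>\<in>linfty. \<bar>L (case_option 0 \<phi>)\<bar> \<le> C * (SUP l. \<bar>\<phi> l\<bar>)"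
  proof (intro exI[of _ 1] ballI)
    fix \<phi> :: "'l \<Rightarrow> real" assume \<phi>: "\<phi> \<in> linfty"
    let ?S = "SUP l. \<bar>\<phi> l\<bar>"
    have ext: "case_option 0 \<phi> \<in> linfty" using linfty_case_option[OF \<phi>] .
    have "\<bar>case_option 0 \<phi> i\<bar> \<le> ?S" for i
      using linfty_abs_SUP_upper[OF \<phi>] by (cases i) (auto intro: order_trans[OF abs_ge_zero])
    then have "(SUP i. case_option 0 \<phi> i) \<le> ?S" "(SUP i. - case_option 0 \<phi> i) \<le> ?S"
      by (auto intro!: cSUP_least simp: abs_le_iff)
    moreover have "L (case_option 0 \<phi>) \<le> (SUP i. case_option 0 \<phi> i)"
      using dom ext by blast
    moreover have "- L (case_option 0 \<phi>) \<le> (SUP i. - case_option 0 \<phi> i)"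
      using dom linfty.uminus_closed[OF ext] linear_on_uminus[OF L ext] by fastforce
    ultimately show "\<bar>L (case_option 0 \<phi>)\<bar> \<le> 1 * ?S" by simp
  qed
qed

lemma SUP_dominated_functional_option_split:
  fixes L :: "('l option \<Rightarrow> real) \<Rightarrow> real"
  assumes L: "linear_on linfty L" and dom: "\<forall>h\<in>linfty. L h \<le> (SUP i. h i)"
  obtains \<rho> \<Phi> where "0 \<le> \<rho>" "\<Phi> \<in> pos_dual" "\<rho> + \<Phi> (\<lambda>_. 1) = 1"
    "\<And>h. h \<in> linfty \<Longrightarrow> L h = \<rho> * h None + \<Phi> (\<lambda>l. h (Some l))"
proof -
  have nonneg: "\<And>h. h \<in> linfty \<Longrightarrow> \<forall>i. 0 \<le> h i \<Longrightarrow> 0 \<le> L h" and one: "L (\<lambda>_. 1) = 1"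
    using dom unfolding linear_on_linfty_le_SUP_iff[OF L] by blast+
  define e :: "'l option \<Rightarrow> real" where "e = case_option 1 (\<lambda>_. 0)"
  have e: "e \<in> linfty" unfolding e_def by (rule linfty_case_option[OF linfty_const])
  have split: "L h = L e * h None + L (case_option 0 (\<lambda>l. h (Some l)))" if "h \<in> linfty" for h
  proof -
    have "h = (\<lambda>i. h None * e i + case_option 0 (\<lambda>l. h (Some l)) i)"
      by (auto simp: fun_eq_iff e_def split: option.split)
    then have "L h = L (\<lambda>i. h None * e i + case_option 0 (\<lambda>l. h (Some l)) i)"
      by (rule arg_cong)
    also have "\<dots> = h None * L e + L (case_option 0 (\<lambda>l. h (Some l)))"
      using linear_on_add[OF L linfty.scale_closed[OF e] linfty_case_option[OF linfty_compose[OF that]]]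
        linear_on_scale[OF L e] by simp
    finally show ?thesis by simp
  qed
  have "0 \<le> L e" using nonneg[OF e] by (simp add: e_def split: option.split)
  moreover have "L e + L (case_option 0 (\<lambda>_. 1)) = 1"
    using split[OF linfty_const] one by simp
  ultimately show thesis
    using that SUP_dominated_restrict_pos_dual[OF L dom] split by (simp add: mult.commute)
qed

lemma pos_dual_option_functional:
  fixes \<Phi> :: "('l \<Rightarrow> real) \<Rightarrow> real"
  assumes "0 \<le> \<rho>" "\<Phi> \<in> pos_dual" "\<rho> + \<Phi> (\<lambda>_. 1) = 1"
  defines "L \<equiv> \<lambda>h :: 'l option \<Rightarrow> real. \<rho> * h None + \<Phi> (\<lambda>l. h (Some l))"
  shows "linear_on linfty L" "\<forall>h\<in>linfty. L h \<le> (SUP i. h i)"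
proof -
  have \<Phi>: "linear_on linfty \<Phi>" by (rule pos_dual_linear_on[OF assms(2)])
  show L: "linear_on linfty L"
    unfolding linear_on_def
  proof (intro conjI ballI allI)
    fix a b :: "'l option \<Rightarrow> real" assume "a \<in> linfty" "b \<in> linfty"
    then show "L (\<lambda>i. a i + b i) = L a + L b"
      using linear_on_add[OF \<Phi> linfty_compose[OF \<open>a \<in> linfty\<close>, where k = Some]
          linfty_compose[OF \<open>b \<in> linfty\<close>, where k = Some]]
      by (simp add: L_def algebra_simps)
  next
    fix c and a :: "'l option \<Rightarrow> real" assume "a \<in> linfty"
    then show "L (\<lambda>i. c * a i) = c * L a"
      using linear_on_scale[OF \<Phi> linfty_compose[OF \<open>a \<in> linfty\<close>, where k = Some]]
      by (simp add: L_def algebra_simps)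
  qed
  have "0 \<le> L h" if "h \<in> linfty" "\<forall>i. 0 \<le> h i" for h
    using pos_dual_nonneg[OF assms(2) linfty_compose[OF that(1)]] that(2) assms(1) by (simp add: L_def)
  moreover have "L (\<lambda>_. 1) = 1" using assms(3) by (simp add: L_def)
  ultimately show "\<forall>h\<in>linfty. L h \<le> (SUP i. h i)"
    unfolding linear_on_linfty_le_SUP_iff[OF L] by blast
qed

section \<open>Multipliers and infsup-convexity\<close>

lemma ex_pos_dual_multiplier_iff:
  fixes G :: "'x \<Rightarrow> 'l option \<Rightarrow> real"
  assumes G: "\<forall>x\<in>X. G x \<in> linfty"
  shows "(\<exists>\<rho> \<Phi>. 0 \<le> \<rho> \<and> \<Phi> \<in> pos_dual \<and> \<rho> + \<Phi> (\<lambda>_. 1) = 1 \<and>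
            (\<forall>x\<in>X. 0 \<le> \<rho> * G x None + \<Phi> (\<lambda>l. G x (Some l))))
    \<longleftrightarrow> (\<exists>L. linear_on linfty L \<and> (\<forall>h\<in>linfty. L h \<le> (SUP i. h i)) \<and> (\<forall>x\<in>X. 0 \<le> L (G x)))"
proof
  assume "\<exists>\<rho> \<Phi>. 0 \<le> \<rho> \<and> \<Phi> \<in> pos_dual \<and> \<rho> + \<Phi> (\<lambda>_. 1) = 1 \<and>
            (\<forall>x\<in>X. 0 \<le> \<rho> * G x None + \<Phi> (\<lambda>l. G x (Some l)))"
  then obtain \<rho> \<Phi> where "0 \<le> \<rho>" "\<Phi> \<in> pos_dual" "\<rho> + \<Phi> (\<lambda>_. 1) = 1"
    and "\<forall>x\<in>X. 0 \<le> \<rho> * G x None + \<Phi> (\<lambda>l. G x (Some l))"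
    by blast
  then show "\<exists>L. linear_on linfty L \<and> (\<forall>h\<in>linfty. L h \<le> (SUP i. h i)) \<and> (\<forall>x\<in>X. 0 \<le> L (G x))"
    using pos_dual_option_functional[of \<rho> \<Phi>] by blast
next
  assume "\<exists>L. linear_on linfty L \<and> (\<forall>h\<in>linfty. L h \<le> (SUP i. h i)) \<and> (\<forall>x\<in>X. 0 \<le> L (G x))"
  then obtain L where L: "linear_on linfty L" "\<forall>h\<in>linfty. L h \<le> (SUP i. h i)"
    and nonneg: "\<forall>x\<in>X. 0 \<le> L (G x)"
    by blast
  obtain \<rho> \<Phi> where "0 \<le> \<rho>" "\<Phi> \<in> pos_dual" "\<rho> + \<Phi> (\<lambda>_. 1) = 1"
    and "\<And>h. h \<in> linfty \<Longrightarrow> L h = \<rho> * h None + \<Phi> (\<lambda>l. h (Some l))"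
    by (rule SUP_dominated_functional_option_split[OF L]) blast
  moreover have "\<forall>x\<in>X. 0 \<le> \<rho> * G x None + \<Phi> (\<lambda>l. G x (Some l))"
    using G nonneg \<open>\<And>h. h \<in> linfty \<Longrightarrow> L h = _\<close> by simp
  ultimately show "\<exists>\<rho> \<Phi>. 0 \<le> \<rho> \<and> \<Phi> \<in> pos_dual \<and> \<rho> + \<Phi> (\<lambda>_. 1) = 1 \<and>
            (\<forall>x\<in>X. 0 \<le> \<rho> * G x None + \<Phi> (\<lambda>l. G x (Some l)))"
    by blast
qed

lemma ex_SUP_dominated_functional_iff:
  fixes G :: "'x \<Rightarrow> 'i \<Rightarrow> real"
  assumes G: "\<forall>x\<in>X. G x \<in> linfty"
  shows "(\<exists>L. linear_on linfty L \<and> (\<forall>h\<in>linfty. L h \<le> (SUP i. h i)) \<and> (\<forall>x\<in>X. 0 \<le> L (G x)))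
    \<longleftrightarrow> (\<forall>c\<in>generated_cone G X. 0 \<le> (SUP i. ereal (c i)))"
proof -
  have "G ` X \<subseteq> linfty" using G by blast
  then have cone: "c \<in> linfty" if "c \<in> generated_cone G X" for c
    using linfty.generated_cone_subset that by blast
  show ?thesis
  proof
    assume "\<exists>L. linear_on linfty L \<and> (\<forall>h\<in>linfty. L h \<le> (SUP i. h i)) \<and> (\<forall>x\<in>X. 0 \<le> L (G x))"
    then obtain L where L: "linear_on linfty L" "\<forall>h\<in>linfty. L h \<le> (SUP i. h i)"
      and nonneg: "\<forall>x\<in>X. 0 \<le> L (G x)"
      by blast
    show "\<forall>c\<in>generated_cone G X. 0 \<le> (SUP i. ereal (c i))"
    proof
      fix c assume c: "c \<in> generated_cone G X"
      have "0 \<le> L c"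
        by (rule linfty.linear_on_generated_cone_nonneg[OF L(1) \<open>G ` X \<subseteq> linfty\<close> nonneg c])
      also have "\<dots> \<le> (SUP i. c i)" using L(2) cone[OF c] by blast
      finally show "0 \<le> (SUP i. ereal (c i))" by (simp add: linfty_ereal_SUP[OF cone[OF c]])
    qed
  next
    assume nonneg: "\<forall>c\<in>generated_cone G X. 0 \<le> (SUP i. ereal (c i))"
    have SUP_nonneg: "0 \<le> (SUP i. c i)" if "c \<in> generated_cone G X" for c
    proof -
      have "0 \<le> (SUP i. ereal (c i))" using nonneg that by blast
      then show ?thesis unfolding linfty_ereal_SUP[OF cone[OF that]] by simp
    qed
    interpret sublinear_shift linfty "\<lambda>h. SUP i. h i" "generated_cone G X" "\<lambda>_. 0"
    proof (rule sublinear_shift.intro[OF function_subspace_linfty sublinear_shift_axioms.intro])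
      show "(\<lambda>i. s * c i) \<in> generated_cone G X" if "c \<in> generated_cone G X" "0 < s" for c s
        using generated_cone_scale[OF that(1), of s] that(2) by simp
      show "(\<lambda>i. c i + d i) \<in> generated_cone G X" if "c \<in> generated_cone G X" "d \<in> generated_cone G X"
        for c d
        using generated_cone_add[OF that(2,1)] .
    qed (use sublinear_on_SUP cone generated_cone.zero SUP_nonneg in auto)
    obtain L where "linear_on linfty L" "\<forall>h\<in>linfty. L h \<le> (SUP i. h i)"
      and "\<forall>c\<in>generated_cone G X. 0 \<le> L c"
      by (rule mazur_orlicz)
    moreover have "G x \<in> generated_cone G X" if "x \<in> X" for x
      using generated_cone.add_generator[OF generated_cone.zero that, of 1] by simp
    ultimately show "\<exists>L. linear_on linfty L \<and> (\<forall>h\<in>linfty. L h \<le> (SUP i. h i)) \<and> (\<forall>x\<in>X. 0 \<le> L (G x))"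
      by blast
  qed
qed

lemma SUP_ereal_nonneg_scale:
  assumes "0 < s" and nonneg: "0 \<le> (SUP i\<in>I. ereal (s * a i))"
  shows "0 \<le> (SUP i\<in>I. ereal (a i))"
proof (rule ccontr)
  assume "\<not> 0 \<le> (SUP i\<in>I. ereal (a i))"
  then have "(SUP i\<in>I. ereal (a i)) < 0" by simp
  then obtain r where r: "(SUP i\<in>I. ereal (a i)) < ereal r" "ereal r < 0"
    using ereal_dense2 by blast
  have "ereal (s * a i) \<le> ereal (s * r)" if "i \<in> I" for i
  proof -
    have "ereal (a i) \<le> (SUP i\<in>I. ereal (a i))" using that by (rule SUP_upper)
    then have "ereal (a i) < ereal r" using r(1) by (rule le_less_trans)
    then show ?thesis using \<open>0 < s\<close> by simp
  qed
  then have "(SUP i\<in>I. ereal (s * a i)) \<le> ereal (s * r)" by (rule SUP_least)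
  also have "\<dots> < 0" using r(2) \<open>0 < s\<close> by (simp add: mult_pos_neg)
  finally show False using nonneg by simp
qed

lemma infsup_convex_iff_generated_cone:
  fixes g :: "'i \<Rightarrow> 'x \<Rightarrow> real"
  assumes "I \<noteq> {}" and inf_sup: "(INF x\<in>X. SUP i\<in>I. ereal (g i x)) = 0"
  shows "infsup_convex X I g \<longleftrightarrow>
    (\<forall>c\<in>generated_cone (\<lambda>x i. g i x) X. 0 \<le> (SUP i\<in>I. ereal (c i)))"
proof
  assume cone: "\<forall>c\<in>generated_cone (\<lambda>x i. g i x) X. 0 \<le> (SUP i\<in>I. ereal (c i))"
  show "infsup_convex X I g"
    unfolding infsup_convex_def
  proof (intro allI impI, elim conjE)
    fix m :: nat and t :: "nat \<Rightarrow> real" and xs :: "nat \<Rightarrow> 'x"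
    assume "\<forall>j<m. 0 \<le> t j" "\<forall>j<m. xs j \<in> X"
    then have "(\<lambda>i. \<Sum>j<m. t j * g i (xs j)) \<in> generated_cone (\<lambda>x i. g i x) X"
      using sum_in_generated_cone[of m t xs X "\<lambda>x i. g i x"] by simp
    then show "(INF x\<in>X. SUP i\<in>I. ereal (g i x)) \<le> (SUP i\<in>I. ereal (\<Sum>j<m. t j * g i (xs j)))"
      using bspec[OF cone] inf_sup by simp
  qed
next
  assume convex: "infsup_convex X I g"
  show "\<forall>c\<in>generated_cone (\<lambda>x i. g i x) X. 0 \<le> (SUP i\<in>I. ereal (c i))"
  proof
    fix c assume "c \<in> generated_cone (\<lambda>x i. g i x) X"
    then obtain m :: nat and t xs where t_xs: "\<forall>j<m. 0 \<le> t j \<and> xs j \<in> X"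
      and c: "c = (\<lambda>i. \<Sum>j<m. t j * g i (xs j))"
      unfolding generated_cone_iff_sum by blast
    define T where "T = (\<Sum>j<m. t j)"
    have "0 \<le> T" unfolding T_def by (rule sum_nonneg) (use t_xs in auto)
    show "0 \<le> (SUP i\<in>I. ereal (c i))"
    proof (cases "T = 0")
      case True
      then have "\<forall>j<m. t j = 0"
        using t_xs sum_nonneg_eq_0_iff[of "{..<m}" t] by (simp add: T_def)
      then show ?thesis using \<open>I \<noteq> {}\<close> by (simp add: c)
    next
      case False
      with \<open>0 \<le> T\<close> have "0 < T" by simp
      have "1 \<le> m" using False by (cases m) (auto simp: T_def)
      moreover have "(\<Sum>j<m. t j / T) = 1" using False by (simp add: T_def flip: sum_divide_distrib)
      ultimately have "1 \<le> m \<and> (\<forall>j<m. 0 \<le> t j / T) \<and> (\<Sum>j<m. t j / T) = 1 \<and> (\<forall>j<m. xs j \<in> X)"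
        using t_xs \<open>0 < T\<close> by simp
      then have "(INF x\<in>X. SUP i\<in>I. ereal (g i x)) \<le> (SUP i\<in>I. ereal (\<Sum>j<m. t j / T * g i (xs j)))"
        by (rule convex[unfolded infsup_convex_def, rule_format])
      also have "(\<lambda>i. \<Sum>j<m. t j / T * g i (xs j)) = (\<lambda>i. (1 / T) * c i)"
        by (simp add: c sum_distrib_left)
      finally show ?thesis using SUP_ereal_nonneg_scale[of "1 / T"] \<open>0 < T\<close> inf_sup by simp
    qed
  qed
qed

lemma feasible_set_le_0:
  "x \<in> feasible_set X F \<Longrightarrow> (\<lambda>l. F l x) \<in> linfty \<Longrightarrow> F l x \<le> 0"
  unfolding feasible_set_def using linfty_SUP_upper[of "\<lambda>l. F l x" l] by auto

lemma ext_family_linfty: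
  assumes "(\<lambda>l. F l x) \<in> linfty"
  shows "(\<lambda>i. ext_family F f x0 i x) \<in> linfty"
proof -
  obtain B where "\<forall>l. \<bar>F l x\<bar> \<le> B" using assms unfolding linfty_iff by blast
  then have "\<forall>i. \<bar>ext_family F f x0 i x\<bar> \<le> max B \<bar>f x - f x0\<bar>"
    by (auto simp: ext_family_def split: option.split intro: le_max_iff_disj[THEN iffD2])
  then show ?thesis unfolding linfty_iff by blast
qed

lemma INF_SUP_ext_family_eq_0:
  assumes x0: "x0 \<in> feasible_set X F" and min: "\<forall>x\<in>feasible_set X F. f x0 \<le> f x"
    and bounded: "\<forall>x\<in>X. (\<lambda>l. F l x) \<in> linfty"
  shows "(INF x\<in>X. SUP i. ereal (ext_family F f x0 i x)) = 0"
proof (rule antisym)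
  have "x0 \<in> X" using x0 by (simp add: feasible_set_def)
  have "(SUP i. ereal (ext_family F f x0 i x0)) \<le> 0"
    using feasible_set_le_0[OF x0] bounded \<open>x0 \<in> X\<close>
    by (intro SUP_least) (auto simp: ext_family_def split: option.split)
  then show "(INF x\<in>X. SUP i. ereal (ext_family F f x0 i x)) \<le> 0"
    by (rule INF_lower2[OF \<open>x0 \<in> X\<close>])
  show "0 \<le> (INF x\<in>X. SUP i. ereal (ext_family F f x0 i x))"
  proof (rule INF_greatest)
    fix x assume "x \<in> X"
    then have Fx: "(\<lambda>l. F l x) \<in> linfty" using bounded by blast
    obtain i where "0 \<le> ext_family F f x0 i x"
    proof (cases "x \<in> feasible_set X F")
      case True
      then show thesis using that[of None] min by (simp add: ext_family_def)
    next
      case False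
      then have "0 < (SUP l. F l x)" using \<open>x \<in> X\<close> by (simp add: feasible_set_def)
      then obtain l where "0 < F l x"
        using less_cSUP_iff[OF UNIV_not_empty linfty_bdd_above[OF Fx]] by blast
      then show thesis using that[of "Some l"] by (simp add: ext_family_def)
    qed
    also have "ereal (ext_family F f x0 i x) \<le> (SUP i. ereal (ext_family F f x0 i x))"
      by (rule SUP_upper) simp
    finally show "0 \<le> (SUP i. ereal (ext_family F f x0 i x))" by (simp add: zero_ereal_def)
  qed
qed

lemma ex_saddle_point_multiplier_iff:
  assumes x0: "x0 \<in> feasible_set X F" and bounded: "\<forall>x\<in>X. (\<lambda>l. F l x) \<in> linfty"
  shows "(\<exists>\<rho> \<Phi>. \<rho> \<ge> 0 \<and> \<Phi> \<in> pos_dual \<and> \<rho> + \<Phi> (\<lambda>_. 1) = 1 \<and>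
            (\<forall>x\<in>X. \<rho> * f x0 + \<Phi> (\<lambda>l. F l x0) \<le> \<rho> * f x + \<Phi> (\<lambda>l. F l x)) \<and>
            \<Phi> (\<lambda>l. F l x0) = 0)
    \<longleftrightarrow> (\<exists>\<rho> \<Phi>. \<rho> \<ge> 0 \<and> \<Phi> \<in> pos_dual \<and> \<rho> + \<Phi> (\<lambda>_. 1) = 1 \<and>
            (\<forall>x\<in>X. 0 \<le> \<rho> * ext_family F f x0 None x + \<Phi> (\<lambda>l. ext_family F f x0 (Some l) x)))"
proof -
  have "x0 \<in> X" using x0 by (simp add: feasible_set_def)
  then have F_x0: "(\<lambda>l. F l x0) \<in> linfty" using bounded by blast
  have saddle: "((\<forall>x\<in>X. \<rho> * f x0 + \<Phi> (\<lambda>l. F l x0) \<le> \<rho> * f x + \<Phi> (\<lambda>l. F l x)) \<and>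
        \<Phi> (\<lambda>l. F l x0) = 0)
      \<longleftrightarrow> (\<forall>x\<in>X. 0 \<le> \<rho> * ext_family F f x0 None x + \<Phi> (\<lambda>l. ext_family F f x0 (Some l) x))"
    if "\<Phi> \<in> pos_dual" for \<rho> \<Phi>
  proof -
    have "\<Phi> (\<lambda>l. F l x0) \<le> 0"
      using pos_dual_nonpos[OF that F_x0] feasible_set_le_0[OF x0 F_x0] by blast
    then show ?thesis using \<open>x0 \<in> X\<close> by (auto simp: ext_family_def algebra_simps)
  qed
  show ?thesis by (intro ex_cong1 conj_cong refl) (rule saddle)
qed

theorem theorem4p5:
  fixes X :: "'x set" and f :: "'x \<Rightarrow> real" and F :: "'l \<Rightarrow> 'x \<Rightarrow> real" and x0 :: 'x
  assumes "X \<noteq> {}"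
    and "feasible_set X F \<noteq> {}"
    and "x0 \<in> feasible_set X F"
    and "\<forall>x\<in>feasible_set X F. f x0 \<le> f x"
    and "\<forall>x\<in>X. (\<lambda>l. F l x) \<in> linfty"
  shows "(\<exists>\<rho> \<Phi>. \<rho> \<ge> 0 \<and> \<Phi> \<in> pos_dual \<and> \<rho> + \<Phi> (\<lambda>_. 1) = 1 \<and>
            (\<forall>x\<in>X. \<rho> * f x0 + \<Phi> (\<lambda>l. F l x0) \<le> \<rho> * f x + \<Phi> (\<lambda>l. F l x)) \<and>
            \<Phi> (\<lambda>l. F l x0) = 0)
         \<longleftrightarrow> infsup_convex X UNIV (ext_family F f x0)"
proof -
  let ?G = "\<lambda>x i. ext_family F f x0 i x"
  have G: "\<forall>x\<in>X. ?G x \<in> linfty" using assms(5) by (blast intro: ext_family_linfty)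
  have "(\<exists>\<rho> \<Phi>. \<rho> \<ge> 0 \<and> \<Phi> \<in> pos_dual \<and> \<rho> + \<Phi> (\<lambda>_. 1) = 1 \<and>
            (\<forall>x\<in>X. 0 \<le> \<rho> * ?G x None + \<Phi> (\<lambda>l. ?G x (Some l))))
      \<longleftrightarrow> (\<exists>L. linear_on linfty L \<and> (\<forall>h\<in>linfty. L h \<le> (SUP i. h i)) \<and> (\<forall>x\<in>X. 0 \<le> L (?G x)))"
    by (rule ex_pos_dual_multiplier_iff[OF G])
  also have "\<dots> \<longleftrightarrow> (\<forall>c\<in>generated_cone ?G X. 0 \<le> (SUP i. ereal (c i)))"
    by (rule ex_SUP_dominated_functional_iff[OF G])
  also have "\<dots> \<longleftrightarrow> infsup_convex X UNIV (ext_family F f x0)"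
    using infsup_convex_iff_generated_cone[OF UNIV_not_empty INF_SUP_ext_family_eq_0[OF assms(3-5)]]
    by simp
  finally show ?thesis by (rule trans[OF ex_saddle_point_multiplier_iff[where f = f, OF assms(3,5)]])
qed

end
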